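(* Let $K$ be a field of characteristic not equal to $2$ and let $S$ be a (unital, not necessarily associative) $K$-algebra with a pseudo-degree function $\chi$. If $a\in N(S)$ satisfies $\chi(a)=m>0$ and $C_S(a)$ satisfies condition $D(1)$, then $C_S(a)$ has a finite basis as a (left) $K[a]$-module, and the cardinality of this basis divides $m$.
   Context: All algebras are unital but not necessarily associative, and $K$ is embedded in $S$ via the unit. The nucleus $N(S)$ is the set of $x\in S$ with $x(yz)=(xy)z$, $(yx)z=y(xz)$ and $(yz)x=y(zx)$ for all $y,z\in S$. $C_S(a)$ denotes the set of elements of $S$ commuting with $a$, and $K[a]$ the subalgebra generated by $a$. A pseudo-degree function on $S$ is a map $\chi:S\to\mathbb{Z}\cup\{-\infty\}$ such that $\chi(x)=-\infty$ iff $x=0$; $\chi(xy)=\chi(x)+\chi(y)$; and $\chi(x+y)\le\max(\chi(x),\chi(y))$ for all $x,y\in S$. A subalgebra $B\subseteq S$ satisfies condition $D(1)$ if $\chi(x)\ge0$ for all nonzero $x\in B$, and whenever $b_1,b_2\in B$ satisfy $\chi(b_1)=\chi(b_2)$, there exist $\alpha_1,\alpha_2\in K$, not both zero, with $\chi(\alpha_1b_1+\alpha_2b_2)<\chi(b_1)$. *)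

theory Defs
  imports Main "HOL-Library.Extended_Real"
begin

definition kalgebra :: "('k::field \<Rightarrow> 'b::ab_group_add \<Rightarrow> 'b) \<Rightarrow> ('b \<Rightarrow> 'b \<Rightarrow> 'b) \<Rightarrow> 'b \<Rightarrow> bool" where
  "kalgebra smul mul e \<longleftrightarrow>
     vector_space smul \<and>
     (\<forall>x y z. mul (x + y) z = mul x z + mul y z \<and> mul z (x + y) = mul z x + mul z y) \<and>
     (\<forall>c x y. mul (smul c x) y = smul c (mul x y) \<and> mul x (smul c y) = smul c (mul x y)) \<and>
     (\<forall>x. mul e x = x \<and> mul x e = x)"

definition nucleus :: "('b \<Rightarrow> 'b \<Rightarrow> 'b) \<Rightarrow> 'b set" where
  "nucleus mul = {x. \<forall>y z. mul x (mul y z) = mul (mul x y) z \<and>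
                            mul (mul y x) z = mul y (mul x z) \<and>
                            mul (mul y z) x = mul y (mul z x)}"

definition centralizer :: "('b \<Rightarrow> 'b \<Rightarrow> 'b) \<Rightarrow> 'b \<Rightarrow> 'b set" where
  "centralizer mul a = {x. mul x a = mul a x}"

definition subalgebra :: "('k \<Rightarrow> 'b::ab_group_add \<Rightarrow> 'b) \<Rightarrow> ('b \<Rightarrow> 'b \<Rightarrow> 'b) \<Rightarrow> 'b \<Rightarrow> 'b set \<Rightarrow> bool" where
  "subalgebra smul mul e B \<longleftrightarrow> e \<in> B \<and>
     (\<forall>x\<in>B. \<forall>y\<in>B. x + y \<in> B \<and> mul x y \<in> B) \<and> (\<forall>c. \<forall>x\<in>B. smul c x \<in> B)"

definition gen_subalgebra :: "('k \<Rightarrow> 'b::ab_group_add \<Rightarrow> 'b) \<Rightarrow> ('b \<Rightarrow> 'b \<Rightarrow> 'b) \<Rightarrow> 'b \<Rightarrow> 'b \<Rightarrow> 'b set" where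
  "gen_subalgebra smul mul e a = \<Inter>{B. subalgebra smul mul e B \<and> a \<in> B}"

text \<open>Pseudo-degree function with values in Z \<union> {-\<infinity>}, modelled inside ereal.\<close>
definition pseudo_degree :: "('b \<Rightarrow> 'b \<Rightarrow> 'b) \<Rightarrow> ('b::ab_group_add \<Rightarrow> ereal) \<Rightarrow> bool" where
  "pseudo_degree mul chi \<longleftrightarrow>
     (\<forall>x. chi x = -\<infinity> \<longleftrightarrow> x = 0) \<and>
     (\<forall>x. x \<noteq> 0 \<longrightarrow> (\<exists>k::int. chi x = ereal (of_int k))) \<and>
     (\<forall>x y. chi (mul x y) = chi x + chi y) \<and>
     (\<forall>x y. chi (x + y) \<le> max (chi x) (chi y))"

text \<open>Condition D(1); the second clause is required for nonzero b1, b2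
  (for b1 = b2 = 0 it could never hold).\<close>
definition condD1 :: "('k::field \<Rightarrow> 'b::ab_group_add \<Rightarrow> 'b) \<Rightarrow> ('b \<Rightarrow> ereal) \<Rightarrow> 'b set \<Rightarrow> bool" where
  "condD1 smul chi B \<longleftrightarrow>
     (\<forall>x\<in>B. x \<noteq> 0 \<longrightarrow> chi x \<ge> 0) \<and>
     (\<forall>b1\<in>B. \<forall>b2\<in>B. b1 \<noteq> 0 \<and> b2 \<noteq> 0 \<and> chi b1 = chi b2 \<longrightarrow>
        (\<exists>\<alpha>1 \<alpha>2. (\<alpha>1 \<noteq> 0 \<or> \<alpha>2 \<noteq> 0) \<and> chi (smul \<alpha>1 b1 + smul \<alpha>2 b2) < chi b1))"

definition left_module_basis :: "('b \<Rightarrow> 'b \<Rightarrow> 'b) \<Rightarrow> 'b::ab_group_add set \<Rightarrow> 'b set \<Rightarrow> 'b set \<Rightarrow> bool" where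
  "left_module_basis mul R M B \<longleftrightarrow>
     finite B \<and> B \<subseteq> M \<and>
     (\<forall>x\<in>M. \<exists>p. (\<forall>b\<in>B. p b \<in> R) \<and> x = (\<Sum>b\<in>B. mul (p b) b)) \<and>
     (\<forall>p. (\<forall>b\<in>B. p b \<in> R) \<and> (\<Sum>b\<in>B. mul (p b) b) = 0 \<longrightarrow> (\<forall>b\<in>B. p b = 0))"

end

theory Submission
  imports Defs "HOL-Algebra.Elementary_Groups"
begin

(* The degrees of the nonzero elements of C = C_S(a) form a submonoid of the naturals, so their
   residues modulo m = chi(a) form a submonoid, hence a subgroup, of Z/m; the number of residues
   therefore divides m. For each residue pick an element of C of least degree in its class.
   By D(1), any element of C can be lowered in degree by subtracting a scalar multiple of a^k b
   with b such a representative, which gives spanning by induction on the degree. Nonzero elements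
   of K[a] have degrees divisible by m, so the terms of a K[a]-combination of representatives have
   pairwise distinct degrees and cannot cancel, which gives independence. *)

lemma card_residues_of_submonoid_dvd:
  fixes D :: "int set" and M :: int
  assumes "M > 0" and "0 \<in> D" and add_closed: "\<And>x y. x \<in> D \<Longrightarrow> y \<in> D \<Longrightarrow> x + y \<in> D"
  shows "int (card ((\<lambda>n. n mod M) ` D)) dvd M"
proof -
  let ?G = "integer_mod_group (nat M)" and ?H = "(\<lambda>n. n mod M) ` D"
  interpret G: group ?G by simp
  have multiple_closed: "int k * x \<in> D" if "x \<in> D" for k x
    using that by (induction k) (auto simp: distrib_right assms(2) add_closed)
  have "subgroup ?H ?G"
  proof (rule G.submonoid_subgroupI)
    show "submonoid ?H ?G"
    proof
      show "?H \<subseteq> carrier ?G" using assms(1) by (auto simp: carrier_integer_mod_group)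
      show "\<one>\<^bsub>?G\<^esub> \<in> ?H" using assms(2) by force
      show "r \<otimes>\<^bsub>?G\<^esub> s \<in> ?H" if "r \<in> ?H" "s \<in> ?H" for r s
        using that assms(1) by (auto simp: mod_add_eq intro: add_closed)
    qed
    fix r assume "r \<in> ?H"
    then obtain x where x: "x \<in> D" "r = x mod M" by blast
    (* closure under inverses: -x is congruent to (M - 1) x *)
    have "inv\<^bsub>?G\<^esub> r = (- x) mod M"
      using x assms(1) by (simp add: carrier_integer_mod_group mod_minus_eq)
    also have "\<dots> = (- x + x * M) mod M"
      by (simp only: mod_mult_self1)
    also have "\<dots> = (int (nat (M - 1)) * x) mod M"
      using assms(1) by (simp add: algebra_simps)
    finally show "inv\<^bsub>?G\<^esub> r \<in> ?H" using multiple_closed[OF x(1)] by blast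
  qed
  then have "card (rcosets\<^bsub>?G\<^esub> ?H) * card ?H = nat M"
    using G.lagrange assms(1) by (simp add: order_def carrier_integer_mod_group)
  then have "int (card ?H) dvd int (nat M)"
    by (metis dvd_triv_right of_nat_dvd_iff)
  then show ?thesis using assms(1) by simp
qed

lemma subalgebraI:
  assumes "e \<in> B" and "\<And>x y. x \<in> B \<Longrightarrow> y \<in> B \<Longrightarrow> x + y \<in> B"
    and "\<And>x y. x \<in> B \<Longrightarrow> y \<in> B \<Longrightarrow> mul x y \<in> B"
    and "\<And>c x. x \<in> B \<Longrightarrow> smul c x \<in> B"
  shows "subalgebra smul mul e B"
  using assms unfolding subalgebra_def by blast

lemma subalgebra_gen_subalgebra: "subalgebra smul mul e (gen_subalgebra smul mul e a)"
  unfolding gen_subalgebra_def subalgebra_def by blast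

lemma gen_subalgebra_least:
  "subalgebra smul mul e B \<Longrightarrow> a \<in> B \<Longrightarrow> gen_subalgebra smul mul e a \<subseteq> B"
  unfolding gen_subalgebra_def by blast

lemma generator_in_gen_subalgebra: "a \<in> gen_subalgebra smul mul e a"
  unfolding gen_subalgebra_def by blast

definition left_span :: "('b \<Rightarrow> 'b \<Rightarrow> 'b) \<Rightarrow> 'b::ab_group_add set \<Rightarrow> 'b set \<Rightarrow> 'b set" where
  "left_span mul R B = {x. \<exists>p. (\<forall>b\<in>B. p b \<in> R) \<and> x = (\<Sum>b\<in>B. mul (p b) b)}"

lemma left_module_basisI:
  assumes "finite B" and "B \<subseteq> M" and "M \<subseteq> left_span mul R B"
    and "\<And>p b. \<forall>b\<in>B. p b \<in> R \<Longrightarrow> (\<Sum>b\<in>B. mul (p b) b) = 0 \<Longrightarrow> b \<in> B \<Longrightarrow> p b = 0"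
  shows "left_module_basis mul R M B"
  using assms unfolding left_module_basis_def left_span_def by blast

locale unital_algebra =
  fixes smul :: "'k::field \<Rightarrow> 'b::ab_group_add \<Rightarrow> 'b"
    and mul :: "'b \<Rightarrow> 'b \<Rightarrow> 'b" and e :: 'b
  assumes kalgebra: "kalgebra smul mul e"
begin

sublocale vs: vector_space smul
  using kalgebra unfolding kalgebra_def by blast

lemma mul_add_left: "mul (x + y) z = mul x z + mul y z"
  and mul_add_right: "mul z (x + y) = mul z x + mul z y"
  and mul_scale_left: "mul (smul c x) y = smul c (mul x y)"
  and mul_scale_right: "mul x (smul c y) = smul c (mul x y)"
  and mul_unit_left [simp]: "mul e x = x"
  and mul_unit_right [simp]: "mul x e = x"
  using kalgebra unfolding kalgebra_def by blast+

lemma mul_zero_left [simp]: "mul 0 x = 0"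
  using mul_scale_left[of 0 e x] by simp

lemma mul_zero_right [simp]: "mul x 0 = 0"
  using mul_scale_right[of x 0 e] by simp

lemma mul_minus_left: "mul (- x) y = - mul x y"
  using mul_scale_left[of "-1" x y] by (simp add: vs.scale_minus_left)

lemma mul_minus_right: "mul x (- y) = - mul x y"
  using mul_scale_right[of x "-1" y] by (simp add: vs.scale_minus_left)

lemma mul_sum_left: "mul (sum f S) y = (\<Sum>s\<in>S. mul (f s) y)"
  by (induction S rule: infinite_finite_induct) (auto simp: mul_add_left)

lemma mul_sum_right: "mul y (sum f S) = (\<Sum>s\<in>S. mul y (f s))"
  by (induction S rule: infinite_finite_induct) (auto simp: mul_add_right)

lemma subalgebra_zero: "subalgebra smul mul e B \<Longrightarrow> 0 \<in> B"
  unfolding subalgebra_def by (metis vs.scale_zero_left)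

lemma subalgebra_centralizer:
  assumes "a \<in> nucleus mul"
  shows "subalgebra smul mul e (centralizer mul a)"
proof (rule subalgebraI)
  show "e \<in> centralizer mul a"
    by (simp add: centralizer_def)
  show "x + y \<in> centralizer mul a" "smul c x \<in> centralizer mul a"
    if "x \<in> centralizer mul a" "y \<in> centralizer mul a" for x y c
    using that by (simp_all add: centralizer_def mul_add_left mul_add_right mul_scale_left mul_scale_right)
  fix x y assume x: "x \<in> centralizer mul a" and y: "y \<in> centralizer mul a"
  have ax: "mul x a = mul a x" and ay: "mul y a = mul a y"
    using x y by (simp_all add: centralizer_def)
  have "mul (mul x y) a = mul x (mul y a)"
    using assms by (simp add: nucleus_def)
  also have "\<dots> = mul (mul x a) y"
    using assms by (simp add: nucleus_def ay)
  also have "\<dots> = mul a (mul x y)"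
    using assms by (simp add: nucleus_def ax)
  finally show "mul x y \<in> centralizer mul a" by (simp add: centralizer_def)
qed

lemma left_span_zero: "subalgebra smul mul e R \<Longrightarrow> 0 \<in> left_span mul R B"
  unfolding left_span_def by (auto intro!: exI[of _ "\<lambda>_. 0"] simp: subalgebra_zero)

lemma left_span_add:
  assumes "subalgebra smul mul e R" and "x \<in> left_span mul R B" and "y \<in> left_span mul R B"
  shows "x + y \<in> left_span mul R B"
proof -
  obtain p q where "\<forall>b\<in>B. p b \<in> R" "x = (\<Sum>b\<in>B. mul (p b) b)"
    and "\<forall>b\<in>B. q b \<in> R" "y = (\<Sum>b\<in>B. mul (q b) b)"
    using assms(2,3) unfolding left_span_def by blast
  with assms(1) show ?thesis
    unfolding left_span_def subalgebra_def
    by (auto intro!: exI[of _ "\<lambda>b. p b + q b"] simp: mul_add_left sum.distrib)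
qed

lemma left_span_scale:
  assumes "subalgebra smul mul e R" and "x \<in> left_span mul R B"
  shows "smul c x \<in> left_span mul R B"
proof -
  obtain p where "\<forall>b\<in>B. p b \<in> R" "x = (\<Sum>b\<in>B. mul (p b) b)"
    using assms(2) unfolding left_span_def by blast
  with assms(1) show ?thesis
    unfolding left_span_def subalgebra_def
    by (auto intro!: exI[of _ "\<lambda>b. smul c (p b)"] simp: mul_scale_left vs.scale_sum_right)
qed

lemma left_span_generator:
  assumes "subalgebra smul mul e R" and "finite B" and "b \<in> B" and "r \<in> R"
  shows "mul r b \<in> left_span mul R B"
proof -
  have "(\<Sum>b'\<in>B. mul (if b' = b then r else 0) b') = (\<Sum>b'\<in>B. if b' = b then mul r b' else 0)"
    by (rule sum.cong) auto
  also have "\<dots> = mul r b"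
    using assms(2,3) by (simp add: sum.delta')
  finally have "(\<Sum>b'\<in>B. mul (if b' = b then r else 0) b') = mul r b" .
  then show ?thesis
    using assms(1,4) unfolding left_span_def
    by (auto intro!: exI[of _ "\<lambda>b'. if b' = b then r else 0"] simp: subalgebra_zero)
qed

end

locale pseudo_degree_algebra = unital_algebra smul mul e
  for smul :: "'k::field \<Rightarrow> 'b::ab_group_add \<Rightarrow> 'b" and mul e +
  fixes chi :: "'b \<Rightarrow> ereal"
  assumes pseudo_degree: "pseudo_degree mul chi"
begin

lemma chi_eq_minf_iff [simp]: "chi x = -\<infinity> \<longleftrightarrow> x = 0"
  and chi_mul: "chi (mul x y) = chi x + chi y"
  and chi_add_le: "chi (x + y) \<le> max (chi x) (chi y)"
  using pseudo_degree unfolding pseudo_degree_def by blast+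

lemma chi_zero [simp]: "chi 0 = -\<infinity>"
  by simp

definition deg :: "'b \<Rightarrow> int" where
  "deg x = (THE n. chi x = ereal (of_int n))"

lemma chi_deg: "x \<noteq> 0 \<Longrightarrow> chi x = ereal (of_int (deg x))"
proof -
  assume "x \<noteq> 0"
  then obtain k where k: "chi x = ereal (of_int k)"
    using pseudo_degree unfolding pseudo_degree_def by blast
  then have "deg x = k"
    unfolding deg_def by (intro the_equality) auto
  with k show ?thesis by simp
qed

lemma mul_nonzero: "x \<noteq> 0 \<Longrightarrow> y \<noteq> 0 \<Longrightarrow> mul x y \<noteq> 0"
  using chi_mul[of x y] chi_eq_minf_iff[of "mul x y"] by (simp add: chi_deg)

lemma deg_mul: "x \<noteq> 0 \<Longrightarrow> y \<noteq> 0 \<Longrightarrow> deg (mul x y) = deg x + deg y"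
  using chi_mul[of x y] chi_deg[of "mul x y"] by (simp add: chi_deg mul_nonzero)

lemma chi_unit: "e \<noteq> 0 \<Longrightarrow> chi e = 0"
  using chi_mul[of e e] chi_deg[of e] by simp

lemma deg_unit: "e \<noteq> 0 \<Longrightarrow> deg e = 0"
  using chi_unit chi_deg[of e] by simp

lemma chi_uminus: "chi (- x) = chi x"
proof (cases "e = 0")
  case True
  then have "x = 0" using mul_unit_right[of x] by simp
  then show ?thesis by simp
next
  case False
  have "chi e = chi (- e) + chi (- e)"
    using chi_mul[of "- e" "- e"] by (simp add: mul_minus_left mul_minus_right)
  then have "chi (- e) = 0"
    using False chi_unit chi_deg[of "- e"] by simp
  then show ?thesis
    using chi_mul[of "- e" x] by (simp add: mul_minus_left)
qed

lemma chi_add_eq_right: "chi x < chi y \<Longrightarrow> chi (x + y) = chi y"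
proof -
  assume less: "chi x < chi y"
  have "chi y \<le> max (chi (x + y)) (chi (- x))"
    using chi_add_le[of "x + y" "- x"] by simp
  then have "chi y \<le> chi (x + y)"
    using less by (simp add: chi_uminus max_def split: if_splits)
  moreover have "chi (x + y) \<le> chi y"
    using chi_add_le[of x y] less by simp
  ultimately show ?thesis by simp
qed

lemma chi_add_eq_max: "chi x \<noteq> chi y \<Longrightarrow> chi (x + y) = max (chi x) (chi y)"
  using chi_add_eq_right[of x y] chi_add_eq_right[of y x] by (auto simp: add.commute max_def)

lemma chi_sum_dominant_term:
  assumes "finite S" and "S \<noteq> {}"
    and "\<And>s t. s \<in> S \<Longrightarrow> t \<in> S \<Longrightarrow> s \<noteq> t \<Longrightarrow> f s \<noteq> 0 \<Longrightarrow> f t \<noteq> 0 \<Longrightarrow>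
      chi (f s) \<noteq> chi (f t)"
  shows "\<exists>s\<in>S. chi (sum f S) = chi (f s) \<and> (\<forall>t\<in>S. chi (f t) \<le> chi (f s))"
  using assms
proof (induction S rule: finite_ne_induct)
  case (singleton x)
  then show ?case by simp
next
  case (insert x S)
  then obtain s where s: "s \<in> S" "chi (sum f S) = chi (f s)" "\<forall>t\<in>S. chi (f t) \<le> chi (f s)"
    by (metis insert_iff)
  have sum: "sum f (insert x S) = f x + sum f S"
    using insert.hyps by simp
  consider "chi (f s) < chi (f x)" | "chi (f x) < chi (f s)" | "chi (f x) = chi (f s)"
    by fastforce
  then show ?case
  proof cases
    case 1
    then show ?thesis using s sum chi_add_eq_max[of "f x" "sum f S"] by force
  next
    case 2
    then show ?thesis using s sum chi_add_eq_max[of "f x" "sum f S"] by force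
  next
    case 3
    have "s \<noteq> x" using s(1) insert.hyps by blast
    then have "f x = 0 \<or> f s = 0"
      using 3 s(1) insert.prems by blast
    then have "f x = 0" and "sum f S = 0"
      using 3 s(2) by (metis chi_eq_minf_iff)+
    then show ?thesis
      using sum 3 s(3) by (intro bexI[of _ x]) auto
  qed
qed

end

locale D1_centralizer = pseudo_degree_algebra smul mul e chi
  for smul :: "'k::field \<Rightarrow> 'b::ab_group_add \<Rightarrow> 'b" and mul e chi +
  fixes a :: 'b
  assumes a_nucleus: "a \<in> nucleus mul"
    and chi_a_pos: "chi a > 0"
    and D1: "condD1 smul chi (centralizer mul a)"
begin

abbreviation C :: "'b set" where "C \<equiv> centralizer mul a"

abbreviation Ka :: "'b set" where "Ka \<equiv> gen_subalgebra smul mul e a"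

lemma a_nonzero: "a \<noteq> 0"
  using chi_a_pos by auto

lemma unit_nonzero: "e \<noteq> 0"
  using a_nonzero by (metis mul_unit_right mul_zero_right)

lemma deg_a_pos: "deg a > 0"
  using chi_a_pos chi_deg[OF a_nonzero] by simp

lemma subalgebra_C: "subalgebra smul mul e C"
  using a_nucleus by (rule subalgebra_centralizer)

lemma Ka_subset_centralizer: "Ka \<subseteq> C"
  using subalgebra_C by (rule gen_subalgebra_least) (simp add: centralizer_def)

lemma deg_nonneg: "x \<in> C \<Longrightarrow> x \<noteq> 0 \<Longrightarrow> deg x \<ge> 0"
  using D1 chi_deg[of x] unfolding condD1_def by fastforce

lemma chi_scale: "c \<noteq> 0 \<Longrightarrow> chi (smul c x) = chi x"
proof -
  assume "c \<noteq> 0"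
  let ?u = "smul c e" and ?v = "smul (inverse c) e"
  have nonzero: "?u \<noteq> 0" "?v \<noteq> 0"
    using \<open>c \<noteq> 0\<close> unit_nonzero by simp_all
  have "?u \<in> C" "?v \<in> C"
    using subalgebra_C unfolding subalgebra_def by blast+
  then have "deg ?u \<ge> 0" "deg ?v \<ge> 0"
    using nonzero deg_nonneg by blast+
  moreover have "mul ?u ?v = e"
    using \<open>c \<noteq> 0\<close> by (simp add: mul_scale_left mul_scale_right)
  then have "deg ?u + deg ?v = 0"
    using deg_mul[OF nonzero] deg_unit[OF unit_nonzero] by simp
  ultimately have "chi ?u = 0"
    using chi_deg[OF nonzero(1)] by simp
  then show ?thesis
    using chi_mul[of ?u x] by (simp add: mul_scale_left)
qed

lemma cancel_leading_term:
  assumes "x \<in> C" and "z \<in> C" and "x \<noteq> 0" and "z \<noteq> 0" and "chi z = chi x"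
  obtains c where "chi (x + smul c z) < chi x"
proof -
  obtain \<alpha> \<beta> where "\<alpha> \<noteq> 0 \<or> \<beta> \<noteq> 0" and less: "chi (smul \<alpha> x + smul \<beta> z) < chi x"
    using D1 assms unfolding condD1_def by metis
  moreover have "\<alpha> \<noteq> 0"
  proof
    assume "\<alpha> = 0"
    with calculation show False
      using chi_scale assms(5) by simp
  qed
  moreover have "smul \<alpha> x + smul \<beta> z = smul \<alpha> (x + smul (\<beta> / \<alpha>) z)"
    using \<open>\<alpha> \<noteq> 0\<close> by (simp add: vs.scale_right_distrib)
  ultimately show ?thesis
    using that chi_scale by auto
qed

primrec a_pow :: "nat \<Rightarrow> 'b" where
  "a_pow 0 = e"
| "a_pow (Suc k) = mul a (a_pow k)"

lemma a_pow_add: "mul (a_pow i) (a_pow j) = a_pow (i + j)"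
proof -
  have "mul (mul a y) z = mul a (mul y z)" for y z
    using a_nucleus by (simp add: nucleus_def)
  then show ?thesis by (induction i) simp_all
qed

lemma a_pow_nonzero: "a_pow k \<noteq> 0"
  by (induction k) (simp_all add: unit_nonzero a_nonzero mul_nonzero)

lemma deg_a_pow: "deg (a_pow k) = int k * deg a"
  by (induction k) (simp_all add: deg_unit unit_nonzero deg_mul a_nonzero a_pow_nonzero algebra_simps)

lemma a_pow_in_Ka: "a_pow k \<in> Ka"
  using subalgebra_gen_subalgebra[of smul mul e a] generator_in_gen_subalgebra[of a smul mul e]
  by (induction k) (auto simp: subalgebra_def)

lemma mul_span_a_pow:
  assumes "x \<in> vs.span (range a_pow)" and "y \<in> vs.span (range a_pow)"
  shows "mul x y \<in> vs.span (range a_pow)"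
proof -
  obtain T u T' u' where T: "finite T" "T \<subseteq> range a_pow" "x = (\<Sum>v\<in>T. smul (u v) v)"
    and T': "finite T'" "T' \<subseteq> range a_pow" "y = (\<Sum>w\<in>T'. smul (u' w) w)"
    using assms unfolding vs.span_explicit by blast
  have "mul x y = (\<Sum>w\<in>T'. smul (u' w) (\<Sum>v\<in>T. smul (u v) (mul v w)))"
    unfolding T(3) T'(3) by (simp add: mul_sum_left mul_sum_right mul_scale_left mul_scale_right)
  also have "\<dots> \<in> vs.span (range a_pow)"
  proof (intro vs.span_sum vs.span_scale)
    fix w v assume "w \<in> T'" "v \<in> T"
    then have "mul v w \<in> range a_pow"
      using T(2) T'(2) a_pow_add by blast
    then show "mul v w \<in> vs.span (range a_pow)"
      by (rule vs.span_base)
  qed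
  finally show ?thesis .
qed

lemma Ka_subset_span_a_pow: "Ka \<subseteq> vs.span (range a_pow)"
proof (rule gen_subalgebra_least)
  show "a \<in> vs.span (range a_pow)"
    using vs.span_base[OF rangeI[of a_pow "Suc 0"]] by simp
  show "subalgebra smul mul e (vs.span (range a_pow))"
  proof (rule subalgebraI)
    show "e \<in> vs.span (range a_pow)"
      using vs.span_base[OF rangeI[of a_pow 0]] by simp
  qed (rule vs.span_add vs.span_scale mul_span_a_pow; assumption)+
qed

lemma deg_a_dvd_deg_Ka:
  assumes "p \<in> Ka" and "p \<noteq> 0"
  shows "deg a dvd deg p"
proof -
  obtain T u where T: "finite T" "T \<subseteq> range a_pow" "p = (\<Sum>v\<in>T. smul (u v) v)"
    using assms(1) Ka_subset_span_a_pow unfolding vs.span_explicit by blast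
  have chi_term: "chi (smul (u (a_pow i)) (a_pow i)) = ereal (of_int (int i * deg a))"
    if "u (a_pow i) \<noteq> 0" for i
    using that chi_scale chi_deg[OF a_pow_nonzero] by (simp add: deg_a_pow)
  have "T \<noteq> {}"
    using assms(2) T(3) by auto
  moreover have "chi (smul (u v) v) \<noteq> chi (smul (u w) w)"
    if vw: "v \<in> T" "w \<in> T" "v \<noteq> w" "smul (u v) v \<noteq> 0" "smul (u w) w \<noteq> 0" for v w
  proof -
    obtain i j where ij: "v = a_pow i" "w = a_pow j"
      using vw(1,2) T(2) by blast
    then have "i \<noteq> j" and "u (a_pow i) \<noteq> 0" and "u (a_pow j) \<noteq> 0"
      using vw(3-5) by auto
    then show ?thesis
      unfolding ij using chi_term deg_a_pos by simp
  qed
  ultimately obtain v where v: "v \<in> T" "chi p = chi (smul (u v) v)"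
    using chi_sum_dominant_term[OF T(1), of "\<lambda>v. smul (u v) v"] unfolding T(3) by blast
  then have "u v \<noteq> 0"
    using assms(2) by (metis chi_eq_minf_iff vs.scale_zero_left)
  moreover obtain i where "v = a_pow i"
    using v(1) T(2) by blast
  ultimately have "chi p = ereal (of_int (int i * deg a))"
    using v(2) chi_term by simp
  then have "deg p = int i * deg a"
    using chi_deg[OF assms(2)] by (metis ereal.inject of_int_eq_iff)
  then show ?thesis by simp
qed

definition residues :: "int set" where
  "residues = (\<lambda>x. deg x mod deg a) ` (C - {0})"

lemma card_residues_dvd: "int (card residues) dvd deg a"
proof -
  have "residues = (\<lambda>n. n mod deg a) ` (deg ` (C - {0}))"
    unfolding residues_def by (simp add: image_image)
  moreover have "0 \<in> deg ` (C - {0})"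
  proof
    show "e \<in> C - {0}"
      using unit_nonzero by (simp add: centralizer_def)
  qed (simp add: deg_unit unit_nonzero)
  moreover have "n + n' \<in> deg ` (C - {0})"
    if degs: "n \<in> deg ` (C - {0})" "n' \<in> deg ` (C - {0})" for n n'
  proof -
    obtain x x' where "x \<in> C - {0}" "x' \<in> C - {0}" "n = deg x" "n' = deg x'"
      using degs by blast
    moreover have "mul x x' \<in> C"
      using calculation(1,2) subalgebra_C unfolding subalgebra_def by blast
    ultimately show ?thesis
      using deg_mul[of x x'] mul_nonzero[of x x'] by (intro image_eqI[of _ _ "mul x x'"]) auto
  qed
  ultimately show ?thesis
    using card_residues_of_submonoid_dvd[OF deg_a_pos] by simp
qed

lemma finite_residues: "finite residues"
proof (rule finite_subset)
  show "residues \<subseteq> {0..<deg a}"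
    unfolding residues_def using deg_a_pos by auto
qed simp

definition class_rep :: "int \<Rightarrow> 'b" where
  "class_rep r = (SOME b. b \<in> C - {0} \<and> deg b mod deg a = r \<and>
     (\<forall>x\<in>C - {0}. deg x mod deg a = r \<longrightarrow> deg b \<le> deg x))"

lemma class_rep:
  assumes "r \<in> residues"
  shows "class_rep r \<in> C" and "class_rep r \<noteq> 0" and "deg (class_rep r) mod deg a = r"
    and "\<And>x. x \<in> C \<Longrightarrow> x \<noteq> 0 \<Longrightarrow> deg x mod deg a = r \<Longrightarrow> deg (class_rep r) \<le> deg x"
proof -
  let ?P = "\<lambda>x. x \<in> C - {0} \<and> deg x mod deg a = r"
  obtain x0 where "?P x0"
    using assms unfolding residues_def by blast
  then obtain b where b: "?P b" and least: "\<And>x. ?P x \<Longrightarrow> nat (deg b) \<le> nat (deg x)"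
    using ex_has_least_nat[of ?P x0 "\<lambda>x. nat (deg x)"] by blast
  have "deg b \<le> deg x" if "?P x" for x
    using least[OF that] deg_nonneg[of b] deg_nonneg[of x] that b by simp
  with b have "b \<in> C - {0} \<and> deg b mod deg a = r \<and>
      (\<forall>x\<in>C - {0}. deg x mod deg a = r \<longrightarrow> deg b \<le> deg x)"
    by blast
  then have "class_rep r \<in> C - {0} \<and> deg (class_rep r) mod deg a = r \<and>
      (\<forall>x\<in>C - {0}. deg x mod deg a = r \<longrightarrow> deg (class_rep r) \<le> deg x)"
    unfolding class_rep_def by (rule someI)
  then show "class_rep r \<in> C" "class_rep r \<noteq> 0" "deg (class_rep r) mod deg a = r"
    and "\<And>x. x \<in> C \<Longrightarrow> x \<noteq> 0 \<Longrightarrow> deg x mod deg a = r \<Longrightarrow> deg (class_rep r) \<le> deg x"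
    by auto
qed

definition basis :: "'b set" where
  "basis = class_rep ` residues"

lemma finite_basis: "finite basis"
  unfolding basis_def using finite_residues by simp

lemma basis_subset_C: "basis \<subseteq> C"
  unfolding basis_def using class_rep(1) by blast

lemma basis_nonzero: "b \<in> basis \<Longrightarrow> b \<noteq> 0"
  unfolding basis_def using class_rep(2) by auto

lemma basis_eqI:
  assumes "b \<in> basis" and "b' \<in> basis" and "deg b mod deg a = deg b' mod deg a"
  shows "b = b'"
proof -
  obtain r r' where "r \<in> residues" "r' \<in> residues" "b = class_rep r" "b' = class_rep r'"
    using assms(1,2) unfolding basis_def by blast
  with assms(3) show ?thesis
    using class_rep(3) by metis
qed

lemma card_basis: "card basis = card residues"
proof -
  have "inj_on class_rep residues"
    by (rule inj_onI) (metis class_rep(3))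
  then show ?thesis
    unfolding basis_def by (rule card_image)
qed

lemma basis_multiple_of_same_degree:
  assumes "x \<in> C" and "x \<noteq> 0"
  obtains b k where "b \<in> basis" and "chi (mul (a_pow k) b) = chi x"
proof -
  let ?r = "deg x mod deg a"
  have r: "?r \<in> residues"
    unfolding residues_def using assms by blast
  let ?b = "class_rep ?r"
  have "deg ?b \<le> deg x"
    using class_rep[OF r] assms by simp
  moreover obtain q where q: "deg x - deg ?b = deg a * q"
    using class_rep(3)[OF r] by (metis mod_eq_dvd_iff dvdE)
  ultimately have "0 \<le> deg a * q"
    by simp
  then have "q \<ge> 0"
    using deg_a_pos by (simp add: zero_le_mult_iff)
  with q obtain k :: nat where k: "deg x = int k * deg a + deg ?b"
    by (metis diff_add_cancel mult.commute nonneg_eq_int)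
  have "chi (mul (a_pow k) ?b) = chi x"
    using class_rep(2)[OF r] assms(2) k
    by (simp add: chi_deg mul_nonzero a_pow_nonzero deg_mul deg_a_pow)
  then show ?thesis
    using that r unfolding basis_def by blast
qed

abbreviation basis_span :: "'b set" where "basis_span \<equiv> left_span mul Ka basis"

lemma lower_degree_remainder:
  assumes "x \<in> C" and "x \<noteq> 0"
  obtains y where "y \<in> C" and "chi y < chi x" and "x - y \<in> basis_span"
proof -
  obtain b k where b: "b \<in> basis" and chi_z: "chi (mul (a_pow k) b) = chi x"
    using basis_multiple_of_same_degree[OF assms] .
  define z where "z = mul (a_pow k) b"
  have "a_pow k \<in> C" and "b \<in> C"
    using a_pow_in_Ka Ka_subset_centralizer b basis_subset_C by blast+
  then have z: "z \<in> C" "z \<noteq> 0"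
    unfolding z_def using subalgebra_C basis_nonzero[OF b]
    by (simp_all add: subalgebra_def a_pow_nonzero mul_nonzero)
  have "z \<in> basis_span"
    unfolding z_def using subalgebra_gen_subalgebra finite_basis b a_pow_in_Ka
    by (rule left_span_generator)
  have "chi z = chi x"
    unfolding z_def by (rule chi_z)
  then obtain c where "chi (x + smul c z) < chi x"
    using cancel_leading_term[OF assms(1) z(1) assms(2) z(2)] by blast
  define y where "y = x + smul c z"
  have "chi y < chi x"
    unfolding y_def by fact
  moreover have "y \<in> C"
    unfolding y_def using assms(1) z(1) subalgebra_C by (simp add: subalgebra_def)
  moreover have "x - y \<in> basis_span"
    using left_span_scale[OF subalgebra_gen_subalgebra \<open>z \<in> basis_span\<close>, of "- c"]
    unfolding y_def by (simp add: vs.scale_minus_left)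
  ultimately show ?thesis using that by blast
qed

lemma C_subset_basis_span: "C \<subseteq> basis_span"
proof
  fix x assume "x \<in> C"
  then show "x \<in> basis_span"
  proof (induction "nat (deg x)" arbitrary: x rule: less_induct)
    case less
    show ?case
    proof (cases "x = 0")
      case True
      then show ?thesis using left_span_zero[OF subalgebra_gen_subalgebra] by simp
    next
      case False
      obtain y where y: "y \<in> C" "chi y < chi x" "x - y \<in> basis_span"
        using lower_degree_remainder[OF less.prems False] .
      have "y \<in> basis_span"
      proof (cases "y = 0")
        case True
        then show ?thesis using left_span_zero[OF subalgebra_gen_subalgebra] by simp
      next
        case False
        then have "nat (deg y) < nat (deg x)"
          using y(1,2) \<open>x \<noteq> 0\<close> deg_nonneg[OF y(1)] by (simp add: chi_deg)
        then show ?thesis using less.hyps y(1) by blast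
      qed
      then have "(x - y) + y \<in> basis_span"
        using y(3) left_span_add[OF subalgebra_gen_subalgebra] by blast
      then show ?thesis by simp
    qed
  qed
qed

lemma basis_independent:
  assumes "\<forall>b\<in>basis. p b \<in> Ka" and "(\<Sum>b\<in>basis. mul (p b) b) = 0" and "b \<in> basis"
  shows "p b = 0"
proof -
  have deg_term_mod: "deg (mul (p b) b) mod deg a = deg b mod deg a"
    if "b \<in> basis" "p b \<noteq> 0" for b
  proof -
    have "deg a dvd deg (p b)"
      using that assms(1) by (simp add: deg_a_dvd_deg_Ka)
    then show ?thesis
      using that basis_nonzero by (auto simp: deg_mul elim!: dvdE)
  qed
  have distinct_degrees: "chi (mul (p b) b) \<noteq> chi (mul (p b') b')"
    if bb': "b \<in> basis" "b' \<in> basis" "b \<noteq> b'" "mul (p b) b \<noteq> 0" "mul (p b') b' \<noteq> 0" for b b'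
  proof
    assume "chi (mul (p b) b) = chi (mul (p b') b')"
    then have "deg (mul (p b) b) = deg (mul (p b') b')"
      using bb'(4,5) by (simp add: chi_deg)
    moreover have "p b \<noteq> 0" "p b' \<noteq> 0"
      using bb'(4,5) by auto
    ultimately have "deg b mod deg a = deg b' mod deg a"
      using bb'(1,2) deg_term_mod by metis
    then show False
      using bb'(1-3) basis_eqI by blast
  qed
  have "basis \<noteq> {}"
    using assms(3) by blast
  then obtain s where "chi (\<Sum>b\<in>basis. mul (p b) b) = chi (mul (p s) s)"
    and dominant: "\<forall>t\<in>basis. chi (mul (p t) t) \<le> chi (mul (p s) s)"
    using chi_sum_dominant_term[where f = "\<lambda>b. mul (p b) b", OF finite_basis _ distinct_degrees]
    by blast
  then have "chi (mul (p b) b) \<le> -\<infinity>"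
    using assms(2,3) dominant by simp
  then have "mul (p b) b = 0"
    by simp
  then show ?thesis
    using basis_nonzero[OF assms(3)] mul_nonzero by blast
qed

theorem left_module_basis_centralizer:
  "left_module_basis mul Ka C basis \<and> int (card basis) dvd deg a"
proof
  show "left_module_basis mul Ka C basis"
    using finite_basis basis_subset_C C_subset_basis_span basis_independent by (rule left_module_basisI)
  show "int (card basis) dvd deg a"
    using card_basis card_residues_dvd by simp
qed

end

theorem theorem2p10:
  fixes smul :: "'k::field \<Rightarrow> 'b::ab_group_add \<Rightarrow> 'b"
    and mul :: "'b \<Rightarrow> 'b \<Rightarrow> 'b" and e :: 'b
    and chi :: "'b \<Rightarrow> ereal" and a :: 'b and m :: int
  assumes "CHAR('k) \<noteq> 2"
    and "kalgebra smul mul e"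
    and "pseudo_degree mul chi"
    and "a \<in> nucleus mul"
    and "chi a = ereal (of_int m)" and "m > 0"
    and "condD1 smul chi (centralizer mul a)"
  shows "\<exists>B. left_module_basis mul (gen_subalgebra smul mul e a) (centralizer mul a) B
             \<and> int (card B) dvd m"
proof -
  interpret D1_centralizer smul mul e chi a
    using assms(2-7) by unfold_locales simp_all
  have "deg a = m"
    using chi_deg[OF a_nonzero] assms(5) by simp
  then show ?thesis
    using left_module_basis_centralizer by blast
qed

end
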